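(* Let $\mu$ be a strict partition. Then $$M\,\mathcal Q(\mu,\mu+(1))=\mathcal Q(\mu,\overline{\mu})\quad\text{and}\quad N\,\mathcal Q(\mu,\mu+(1))=\mathcal Q(\overline{\mu},\overline{\mu}+(1)).$$ Moreover, for any $\beta\in\mathcal Q(\mu,\overline\mu)$ (respectively $\beta\in\mathcal Q(\overline\mu,\overline\mu+(1))$) there is a unique $\alpha\in\mathcal Q(\mu,\mu+(1))$ with $\beta\in M(\alpha)$ (respectively $\beta\in N(\alpha)$).
   Context: Partitions are weakly decreasing sequences of nonnegative integers with finitely many nonzero parts, identified with Ferrers boards. $\alpha$ contains $\mu$ if deleting some rows and some columns of the Ferrers board of $\alpha$ and top/left-justifying yields $\mu$; otherwise $\alpha$ avoids $\mu$. Strict: positive parts distinct. $\alpha+\beta=(\alpha_1+\beta_1,\alpha_2+\beta_2,\ldots)$; $(w^m)$ is the partition with $m$ parts equal to $w$. $m(\alpha)$ is the multiplicity of the largest part of $\alpha$. $\mathcal Q(\tau,\mu)$ is the set of partitions of positive weight containing $\tau$ and avoiding $\mu$. For a partition $\mu$, $\overline\mu=(\mu_1+1,\mu_1,\mu_2,\ldots)$. For a partition $\alpha$: $M(\alpha)=\{\alpha+(w^{m(\alpha)}):w\ge0\}$ and $N(\alpha)=\{\alpha+(w^{m(\alpha)})+(1^c):w\ge0,\ 0<c<m(\alpha)\}$; for a set $S$ of partitions, $MS=\bigcup_{\alpha\in S}M(\alpha)$ and $NS=\bigcup_{\alpha\in S}N(\alpha)$. *)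

theory Defs
  imports Main
begin

definition is_partition :: "nat list \<Rightarrow> bool" where
  "is_partition xs \<longleftrightarrow> sorted_wrt (\<ge>) xs \<and> (\<forall>x\<in>set xs. 0 < x)"

definition strict_partition :: "nat list \<Rightarrow> bool" where
  "strict_partition xs \<longleftrightarrow> is_partition xs \<and> sorted_wrt (>) xs"

definition weight :: "nat list \<Rightarrow> nat" where
  "weight xs = sum_list xs"

definition part :: "nat list \<Rightarrow> nat \<Rightarrow> nat" where
  "part xs i = (if i < length xs then xs ! i else 0)"

definition ferrers :: "nat list \<Rightarrow> (nat \<times> nat) set" where
  "ferrers xs = {(i, j). i < length xs \<and> j < xs ! i}"

text \<open>alpha contains mu: keep rows R and columns C of the Ferrers board of alpha,
  then top/left-justify (renumber kept rows/columns in order); the result is the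
  Ferrers board of mu.\<close>
definition contains :: "nat list \<Rightarrow> nat list \<Rightarrow> bool" where
  "contains \<alpha> \<mu> \<longleftrightarrow> (\<exists>R C :: nat set.
     ferrers \<mu> = (\<lambda>(i, j). (card {r\<in>R. r < i}, card {c\<in>C. c < j})) ` (ferrers \<alpha> \<inter> (R \<times> C)))"

text \<open>Componentwise sum of partitions (zero parts dropped to stay canonical).\<close>
definition padd :: "nat list \<Rightarrow> nat list \<Rightarrow> nat list" where
  "padd xs ys = filter (\<lambda>x. 0 < x)
     (map (\<lambda>i. part xs i + part ys i) [0..<max (length xs) (length ys)])"

definition mlp :: "nat list \<Rightarrow> nat" where
  "mlp \<alpha> = (if \<alpha> = [] then 0 else length (filter (\<lambda>x. x = hd \<alpha>) \<alpha>))"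

definition Q :: "nat list \<Rightarrow> nat list \<Rightarrow> nat list set" where
  "Q \<tau> \<mu> = {\<alpha>. is_partition \<alpha> \<and> 0 < weight \<alpha> \<and> contains \<alpha> \<tau> \<and> \<not> contains \<alpha> \<mu>}"

definition pbar :: "nat list \<Rightarrow> nat list" where
  "pbar \<mu> = filter (\<lambda>x. 0 < x) ((part \<mu> 0 + 1) # \<mu>)"

definition Mset :: "nat list \<Rightarrow> nat list set" where
  "Mset \<alpha> = {padd \<alpha> (replicate (mlp \<alpha>) w) | w. True}"

definition Nset :: "nat list \<Rightarrow> nat list set" where
  "Nset \<alpha> = {padd (padd \<alpha> (replicate (mlp \<alpha>) w)) (replicate c 1) | w c. 0 < c \<and> c < mlp \<alpha>}"

definition MS :: "nat list set \<Rightarrow> nat list set" where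
  "MS S = (\<Union>\<alpha>\<in>S. Mset \<alpha>)"

definition NS :: "nat list set \<Rightarrow> nat list set" where
  "NS S = (\<Union>\<alpha>\<in>S. Nset \<alpha>)"

end

theory Submission
  imports Defs
begin

text \<open>
  A strict partition \<open>\<mu>\<^sub>1 > \<dots> > \<mu>\<^sub>l\<close> is contained in \<open>\<alpha>\<close> exactly when \<open>\<alpha>\<close> has parts
  \<open>a\<^sub>1 > \<dots> > a\<^sub>l\<close> with \<open>a\<^sub>i - a\<^sub>i\<^sub>+\<^sub>1 \<ge> \<mu>\<^sub>i - \<mu>\<^sub>i\<^sub>+\<^sub>1\<close>, where \<open>a\<^sub>l\<^sub>+\<^sub>1 = \<mu>\<^sub>l\<^sub>+\<^sub>1 = 0\<close>:
  keep the rows of these parts and, between consecutive ones, just enough columns to realise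
  the drops of \<open>\<mu>\<close>. So containment of \<open>\<mu>\<close> only depends on the set of parts of \<open>\<alpha>\<close>, and the
  part used for the top row may be taken as large as possible.

  Write \<open>\<alpha> = (v\<^sup>k, \<rho>)\<close> with all parts of \<open>\<rho>\<close> below \<open>v\<close>, and let \<open>u\<close> be the least length of a
  top row under which parts of \<open>\<rho>\<close> host \<open>\<mu>\<close>. Then \<open>\<alpha>\<close> contains \<open>\<mu>\<close> iff \<open>u \<le> v\<close>, it contains
  \<open>\<mu> + (1)\<close> iff \<open>u \<le> v - 1\<close>, and it contains \<open>pbar \<mu>\<close> iff \<open>\<rho>\<close> contains \<open>\<mu>\<close>. Hence
  \<open>Q(\<mu>, \<mu> + (1))\<close> consists of the \<open>(u\<^sup>k, \<rho>)\<close> with \<open>\<rho>\<close> avoiding \<open>\<mu>\<close>, \<open>Q(\<mu>, pbar \<mu>)\<close> of the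
  \<open>(v\<^sup>k, \<rho>)\<close> with \<open>v \<ge> u\<close>, which is \<open>M(u\<^sup>k, \<rho>)\<close>, and \<open>Q(pbar \<mu>, pbar \<mu> + (1))\<close> of the
  \<open>((v + 1)\<^sup>c, v\<^sup>k\<^sup>-\<^sup>c, \<rho>)\<close> with \<open>v \<ge> u\<close>, which is \<open>N(u\<^sup>k, \<rho>)\<close>. Since \<open>k\<close>, \<open>c\<close> and \<open>\<rho>\<close>
  are read off from the image, the preimage is unique.
\<close>

section \<open>Containment via ranks of kept rows and columns\<close>

definition rank :: "nat set \<Rightarrow> nat \<Rightarrow> nat" where
  "rank X i = card {x\<in>X. x < i}"

lemma finite_below: "finite {x\<in>X. x < (i::nat)}"
  by (rule finite_subset[of _ "{..<i}"]) auto

lemma rank_less: "i \<in> X \<Longrightarrow> i < j \<Longrightarrow> rank X i < rank X j"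
  unfolding rank_def by (rule psubset_card_mono[OF finite_below]) auto

lemma rank_mono: "i \<le> j \<Longrightarrow> rank X i \<le> rank X j"
  unfolding rank_def by (rule card_mono[OF finite_below]) auto

lemma rank_le: "rank X i \<le> i"
  unfolding rank_def using card_mono[of "{..<i}" "{x\<in>X. x < i}"] by auto

lemma rank_le_rank_add: "j \<le> i \<Longrightarrow> rank X i + j \<le> rank X j + i"
proof -
  assume "j \<le> i"
  have "rank X i \<le> card ({x\<in>X. x < j} \<union> {j..<i})"
    unfolding rank_def by (intro card_mono) (auto intro: finite_below)
  also have "\<dots> \<le> rank X j + card {j..<i}"
    unfolding rank_def by (rule card_Un_le)
  finally show ?thesis using \<open>j \<le> i\<close> by simp
qed

lemma inj_on_rank: "inj_on (rank X) X"
proof (rule inj_onI)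
  fix a b assume "a \<in> X" "b \<in> X" "rank X a = rank X b"
  then show "a = b"
    using rank_less[of a X b] rank_less[of b X a] by (cases a b rule: linorder_cases) auto
qed

lemma rank_image: "finite X \<Longrightarrow> rank X ` X = {..<card X}"
proof -
  assume "finite X"
  have "rank X a < card X" if "a \<in> X" for a
    unfolding rank_def using that \<open>finite X\<close> by (intro psubset_card_mono) auto
  moreover have "card (rank X ` X) = card X"
    using inj_on_rank by (rule card_image)
  ultimately show ?thesis
    by (intro card_subset_eq) auto
qed

lemma rank_strict_mono_image:
  assumes "strict_mono_on {..<k} I" and "p < k"
  shows "rank (I ` {..<k}) (I p) = p"
proof -
  have "{x \<in> I ` {..<k}. x < I p} = I ` {..<p}"
    using assms by (auto simp: strict_mono_on_less)
  moreover have "inj_on I {..<p}"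
    using strict_mono_on_imp_inj_on[OF assms(1)] by (rule inj_on_subset) (use assms in auto)
  ultimately show ?thesis
    unfolding rank_def by (simp add: card_image)
qed

text \<open>An embedding keeps rows \<open>R\<close> and columns \<open>C\<close> of \<open>\<alpha>\<close>; after justification the kept
  part of row \<open>i \<in> R\<close> becomes row \<open>rank R i\<close>, of length \<open>rank C (\<alpha> ! i)\<close>.\<close>

lemma contains_iff_rank:
  "contains \<alpha> \<mu> \<longleftrightarrow> (\<exists>R C. \<forall>p j. (p, j) \<in> ferrers \<mu> \<longleftrightarrow>
     (\<exists>i\<in>R. i < length \<alpha> \<and> p = rank R i \<and> j < rank C (\<alpha> ! i)))"
proof -
  have "(p, j) \<in> (\<lambda>(i, j). (card {r\<in>R. r < i}, card {c\<in>C. c < j})) ` (ferrers \<alpha> \<inter> (R \<times> C))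
    \<longleftrightarrow> (\<exists>i\<in>R. i < length \<alpha> \<and> p = rank R i \<and> j < rank C (\<alpha> ! i))" for R C p j
  proof
    assume "(p, j) \<in> (\<lambda>(i, j). (card {r\<in>R. r < i}, card {c\<in>C. c < j})) ` (ferrers \<alpha> \<inter> (R \<times> C))"
    then obtain i c where "i \<in> R" "c \<in> C" "i < length \<alpha>" "c < \<alpha> ! i" "p = rank R i" "j = rank C c"
      unfolding ferrers_def rank_def by auto
    then show "\<exists>i\<in>R. i < length \<alpha> \<and> p = rank R i \<and> j < rank C (\<alpha> ! i)"
      using rank_less[of c C "\<alpha> ! i"] by auto
  next
    assume "\<exists>i\<in>R. i < length \<alpha> \<and> p = rank R i \<and> j < rank C (\<alpha> ! i)"
    then obtain i where i: "i \<in> R" "i < length \<alpha>" "p = rank R i" "j < rank C (\<alpha> ! i)" by auto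
    define D where "D = {c\<in>C. c < \<alpha> ! i}"
    have "j \<in> rank D ` D"
      using i rank_image[of D] finite_below[of C "\<alpha> ! i"] unfolding D_def rank_def by auto
    then obtain c where c: "c \<in> D" "j = rank D c" by auto
    have "rank D c = rank C c"
      using c unfolding D_def rank_def by (intro arg_cong[where f = card]) auto
    then have "(i, c) \<in> ferrers \<alpha> \<inter> (R \<times> C)" "(p, j) = (card {r\<in>R. r < i}, card {c'\<in>C. c' < c})"
      using c i unfolding ferrers_def D_def rank_def by auto
    then show "(p, j) \<in> (\<lambda>(i, j). (card {r\<in>R. r < i}, card {c\<in>C. c < j})) ` (ferrers \<alpha> \<inter> (R \<times> C))"
      by force
  qed
  then show ?thesis
    unfolding contains_def set_eq_iff split_paired_All by presburger
qed

lemma rank_increments: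
  assumes "h 0 = 0" and "\<And>y. h y \<le> h (Suc y)" and "\<And>y. h (Suc y) \<le> Suc (h y)"
  shows "rank {c. h (Suc c) = Suc (h c)} y = h y"
proof (induction y)
  case 0
  then show ?case using assms(1) unfolding rank_def by simp
next
  case (Suc y)
  let ?C = "{c. h (Suc c) = Suc (h c)}"
  show ?case
  proof (cases "y \<in> ?C")
    case True
    then have "{c\<in>?C. c < Suc y} = insert y {c\<in>?C. c < y}" by auto
    then show ?thesis using Suc True finite_below unfolding rank_def by simp
  next
    case False
    then have "{c\<in>?C. c < Suc y} = {c\<in>?C. c < y}" using less_Suc_eq by auto
    then show ?thesis using Suc False assms(2,3)[of y] unfolding rank_def by simp
  qed
qed

lemma telescope_steps:
  fixes A f :: "nat \<Rightarrow> nat"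
  assumes step: "\<And>p. p < k \<Longrightarrow> A (Suc p) + f p \<le> A p + f (Suc p)"
    and f_step: "\<And>p. p < k \<Longrightarrow> f (Suc p) \<le> f p"
    and "q \<le> p" and "p \<le> k"
  shows "f q + A p \<le> f p + A q" and "A p \<le> A q" and "f p \<le> f q"
proof -
  have "f q + A (q + d) \<le> f (q + d) + A q \<and> A (q + d) \<le> A q \<and> f (q + d) \<le> f q"
    if "q + d \<le> k" for d
    using that
  proof (induction d)
    case (Suc d)
    then show ?case using step[of "q + d"] f_step[of "q + d"] by simp
  qed simp
  then show "f q + A p \<le> f p + A q" "A p \<le> A q" "f p \<le> f q"
    using assms(3,4) le_Suc_ex by blast+
qed

lemma ex_columns_with_ranks:
  fixes A f :: "nat \<Rightarrow> nat"
  assumes step: "\<And>p. p < k \<Longrightarrow> A (Suc p) + f p \<le> A p + f (Suc p)"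
    and f_step: "\<And>p. p < k \<Longrightarrow> f (Suc p) \<le> f p"
    and A_k: "A k = 0" and f_k: "f k = 0"
  obtains C where "\<And>p. p \<le> k \<Longrightarrow> rank C (A p) = f p"
proof -
  have tele: "f q + A p \<le> f p + A q" "A p \<le> A q" "f p \<le> f q" if "q \<le> p" "p \<le> k" for p q
    using telescope_steps[where A = A and f = f, OF step f_step that] by simp_all
  text \<open>\<open>h\<close> is the least nondecreasing 1-Lipschitz function with \<open>h (A p) \<ge> f p\<close>.\<close>
  define h where "h y = Max ((\<lambda>p. f p - (A p - y)) ` {..k})" for y
  have h_mono: "h y \<le> h (Suc y)" for y
  proof -
    have "f p - (A p - y) \<le> h (Suc y)" if "p \<le> k" for p
    proof -
      have "f p - (A p - Suc y) \<le> h (Suc y)" unfolding h_def using that by (intro Max_ge) auto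
      then show ?thesis by linarith
    qed
    then show ?thesis unfolding h_def[of y] by (intro Max.boundedI) auto
  qed
  have h_lipschitz: "h (Suc y) \<le> Suc (h y)" for y
  proof -
    have "f p - (A p - Suc y) \<le> Suc (h y)" if "p \<le> k" for p
    proof -
      have "f p - (A p - y) \<le> h y" unfolding h_def using that by (intro Max_ge) auto
      then show ?thesis by linarith
    qed
    then show ?thesis unfolding h_def[of "Suc y"] by (intro Max.boundedI) auto
  qed
  have "h 0 = 0"
  proof -
    have "(\<lambda>p. f p - (A p - 0)) ` {..k} = {0}"
      using tele(1)[of _ k] A_k f_k by force
    then show ?thesis unfolding h_def by simp
  qed
  have "h (A p) = f p" if "p \<le> k" for p
  proof (rule antisym)
    show "h (A p) \<le> f p"
      unfolding h_def
    proof (intro Max.boundedI)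
      fix z assume "z \<in> (\<lambda>q. f q - (A q - A p)) ` {..k}"
      then obtain q where "q \<le> k" "z = f q - (A q - A p)" by auto
      then show "z \<le> f p"
        using tele[of q p] tele[of p q] that by (cases "q \<le> p") auto
    qed auto
    show "f p \<le> h (A p)"
      unfolding h_def using that by (intro Max_ge) (auto intro!: image_eqI[where x = p])
  qed
  then show ?thesis
    using that rank_increments[OF \<open>h 0 = 0\<close> h_mono h_lipschitz] by metis
qed

lemma part_Cons_0 [simp]: "part (x # xs) 0 = x"
  by (simp add: part_def)

lemma part_Cons_Suc [simp]: "part (x # xs) (Suc i) = part xs i"
  by (simp add: part_def)

lemma part_Nil [simp]: "part [] i = 0"
  by (simp add: part_def)

section \<open>Containment of a strict partition as a chain of parts\<close>

text \<open>\<open>fits S \<nu> x q\<close>: below a top row of length \<open>x\<close>, rows with lengths in \<open>S\<close> can host the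
  strict partition \<open>q # \<nu>\<close>; successive rows must drop at least as much as the parts do.\<close>

fun fits :: "nat set \<Rightarrow> nat list \<Rightarrow> nat \<Rightarrow> nat \<Rightarrow> bool" where
  "fits S [] x q \<longleftrightarrow> q \<le> x"
| "fits S (n # \<nu>) x q \<longleftrightarrow> (\<exists>a\<in>S. a + q \<le> x + n \<and> fits S \<nu> a n)"

text \<open>\<open>A p\<close> is the length of the row hosting part \<open>p\<close>.\<close>

definition staircase :: "nat set \<Rightarrow> nat list \<Rightarrow> (nat \<Rightarrow> nat) \<Rightarrow> bool" where
  "staircase S \<mu> A \<longleftrightarrow> (\<forall>p. Suc p < length \<mu> \<longrightarrow> A (Suc p) \<in> S) \<and> A (length \<mu>) = 0 \<and>
     (\<forall>p<length \<mu>. A (Suc p) + part \<mu> p \<le> A p + part \<mu> (Suc p))"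

lemma staircase_Cons_iff:
  "staircase S (q # n # \<nu>) (case_nat x A) \<longleftrightarrow>
     A 0 \<in> S \<and> A 0 + q \<le> x + n \<and> staircase S (n # \<nu>) A"
  unfolding staircase_def by (simp add: All_less_Suc2 conj_ac)

lemma fits_iff_staircase: "fits S \<nu> x q \<longleftrightarrow> (\<exists>A. A 0 = x \<and> staircase S (q # \<nu>) A)"
proof (induction \<nu> arbitrary: x q)
  case Nil
  show ?case
  proof
    assume "fits S [] x q"
    then show "\<exists>A. A 0 = x \<and> staircase S [q] A"
      by (intro exI[of _ "\<lambda>p. if p = 0 then x else 0"]) (simp add: staircase_def)
  qed (auto simp: staircase_def)
next
  case (Cons n \<nu>)
  have "case_nat x (A \<circ> Suc) = A" if "A 0 = x" for A :: "nat \<Rightarrow> nat"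
    using that by (auto split: nat.split)
  then have "(\<exists>A. A 0 = x \<and> staircase S (q # n # \<nu>) A) \<longleftrightarrow>
      (\<exists>A. staircase S (q # n # \<nu>) (case_nat x A))"
    by (metis nat.case(1))
  moreover have "fits S (n # \<nu>) x q \<longleftrightarrow> (\<exists>A. A 0 \<in> S \<and> A 0 + q \<le> x + n \<and> staircase S (n # \<nu>) A)"
    using Cons.IH by auto
  ultimately show ?case
    by (simp add: staircase_Cons_iff)
qed

lemma sorted_ge_nth_le: "sorted_wrt (\<ge>) (xs :: 'a :: linorder list) \<Longrightarrow> i \<le> j \<Longrightarrow> j < length xs \<Longrightarrow> xs ! j \<le> xs ! i"
  by (metis le_neq_implies_less order_refl sorted_wrt_nth_less)

lemma contains_row_selection:
  assumes "contains \<alpha> \<mu>" and "\<forall>y\<in>set \<mu>. 0 < y"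
  obtains I C where "\<And>p. p < length \<mu> \<Longrightarrow> I p < length \<alpha> \<and> rank C (\<alpha> ! I p) = \<mu> ! p"
    and "strict_mono_on {..<length \<mu>} I"
proof -
  from assms(1) obtain R C where RC: "\<And>p j. (p, j) \<in> ferrers \<mu> \<longleftrightarrow>
      (\<exists>i\<in>R. i < length \<alpha> \<and> p = rank R i \<and> j < rank C (\<alpha> ! i))"
    unfolding contains_iff_rank by blast
  have "\<exists>i\<in>R. i < length \<alpha> \<and> p = rank R i" if "p < length \<mu>" for p
    using RC[of p 0] that assms(2) nth_mem[OF that] unfolding ferrers_def by auto
  then obtain I where I: "\<And>p. p < length \<mu> \<Longrightarrow> I p \<in> R \<and> I p < length \<alpha> \<and> p = rank R (I p)"
    by metis
  have "rank C (\<alpha> ! I p) = \<mu> ! p" if "p < length \<mu>" for p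
  proof -
    have "j < \<mu> ! p \<longleftrightarrow> j < rank C (\<alpha> ! I p)" for j
    proof -
      have "j < \<mu> ! p \<longleftrightarrow> (\<exists>i\<in>R. i < length \<alpha> \<and> p = rank R i \<and> j < rank C (\<alpha> ! i))"
        using RC[of p j] that unfolding ferrers_def by auto
      also have "\<dots> \<longleftrightarrow> j < rank C (\<alpha> ! I p)"
        using I[OF that] inj_on_rank[of R] by (metis inj_on_def)
      finally show ?thesis .
    qed
    then show ?thesis by (metis less_irrefl linorder_neqE_nat)
  qed
  moreover have "strict_mono_on {..<length \<mu>} I"
  proof (rule strict_mono_onI)
    fix p q assume "p \<in> {..<length \<mu>}" "q \<in> {..<length \<mu>}" "p < q"
    then show "I p < I q"
      using I[of p] I[of q] rank_mono[of "I q" "I p" R] by (metis lessThan_iff not_le_imp_less leD)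
  qed
  ultimately show ?thesis using that I by blast
qed

lemma contains_imp_fits:
  assumes "is_partition \<alpha>" and "\<forall>y\<in>set (m # \<nu>). 0 < y" and "contains \<alpha> (m # \<nu>)"
  shows "\<exists>x\<in>set \<alpha>. fits (set \<alpha>) \<nu> x m"
proof -
  define \<mu> where "\<mu> = m # \<nu>"
  define k where "k = length \<mu>"
  obtain I C where IC: "\<And>p. p < k \<Longrightarrow> I p < length \<alpha> \<and> rank C (\<alpha> ! I p) = \<mu> ! p"
    and I_mono: "strict_mono_on {..<k} I"
    using contains_row_selection assms(2,3) unfolding \<mu>_def k_def by metis
  define A where "A p = (if p < k then \<alpha> ! I p else 0)" for p
  have part_eq: "part \<mu> p = rank C (A p)" if "p < k" for p
    using IC[OF that] that unfolding A_def part_def k_def by simp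
  have "A (Suc p) + part \<mu> p \<le> A p + part \<mu> (Suc p)" if "p < k" for p
  proof (cases "Suc p < k")
    case True
    then have "A (Suc p) \<le> A p"
      using IC[of "Suc p"] strict_mono_onD[OF I_mono, of p "Suc p"] assms(1)
      unfolding A_def is_partition_def by (auto intro!: sorted_ge_nth_le)
    then show ?thesis
      using part_eq[OF that] part_eq[OF True] rank_le_rank_add[of "A (Suc p)" "A p" C] by simp
  next
    case False
    then have "A (Suc p) = 0" "part \<mu> (Suc p) = 0"
      unfolding A_def part_def k_def by auto
    then show ?thesis using part_eq[OF that] rank_le by simp
  qed
  then have "staircase (set \<alpha>) \<mu> A"
    using IC unfolding staircase_def A_def k_def by auto
  moreover have "A 0 \<in> set \<alpha>"
    using IC[of 0] unfolding A_def k_def \<mu>_def by simp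
  ultimately show ?thesis
    using fits_iff_staircase unfolding \<mu>_def by blast
qed

lemma contains_of_row_selection:
  assumes rows: "\<And>p. p < length \<mu> \<Longrightarrow> I p < length \<alpha> \<and> rank C (\<alpha> ! I p) = \<mu> ! p"
    and I_mono: "strict_mono_on {..<length \<mu>} I"
  shows "contains \<alpha> \<mu>"
proof -
  define R where "R = I ` {..<length \<mu>}"
  have "(p, j) \<in> ferrers \<mu> \<longleftrightarrow> (\<exists>i\<in>R. i < length \<alpha> \<and> p = rank R i \<and> j < rank C (\<alpha> ! i))"
    for p j
  proof
    assume "(p, j) \<in> ferrers \<mu>"
    then have "p < length \<mu>" "j < \<mu> ! p" unfolding ferrers_def by auto
    then show "\<exists>i\<in>R. i < length \<alpha> \<and> p = rank R i \<and> j < rank C (\<alpha> ! i)"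
      using rows rank_strict_mono_image[OF I_mono] unfolding R_def by fastforce
  next
    assume "\<exists>i\<in>R. i < length \<alpha> \<and> p = rank R i \<and> j < rank C (\<alpha> ! i)"
    then obtain q where "q < length \<mu>" "p = rank R (I q)" "j < rank C (\<alpha> ! I q)"
      unfolding R_def by auto
    then show "(p, j) \<in> ferrers \<mu>"
      using rows rank_strict_mono_image[OF I_mono] unfolding R_def ferrers_def by auto
  qed
  then show ?thesis
    unfolding contains_iff_rank by blast
qed

lemma less_of_decreasing_steps:
  fixes A :: "nat \<Rightarrow> 'a :: order"
  assumes "\<And>p. p < k \<Longrightarrow> A (Suc p) < A p" and "p < q" and "q \<le> k"
  shows "A q < A p"
  using assms(2,3)
proof (induction q)
  case (Suc q)
  then show ?case using assms(1)[of q] by (cases "p = q") auto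
qed simp

lemma ex_rows_with_parts:
  fixes \<alpha> :: "'a :: linorder list"
  assumes "sorted_wrt (\<ge>) \<alpha>" and "\<And>p. p < k \<Longrightarrow> A p \<in> set \<alpha>"
    and "\<And>p q. p < q \<Longrightarrow> q < k \<Longrightarrow> A q < A p"
  obtains I where "\<And>p. p < k \<Longrightarrow> I p < length \<alpha> \<and> \<alpha> ! I p = A p"
    and "strict_mono_on {..<k} I"
proof -
  have "\<forall>p. \<exists>i. p < k \<longrightarrow> i < length \<alpha> \<and> \<alpha> ! i = A p"
    using assms(2) by (metis in_set_conv_nth)
  then obtain I where I: "\<And>p. p < k \<Longrightarrow> I p < length \<alpha> \<and> \<alpha> ! I p = A p"
    by metis
  have "strict_mono_on {..<k} I"
  proof (rule strict_mono_onI)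
    fix p q assume "p \<in> {..<k}" "q \<in> {..<k}" "p < q"
    then show "I p < I q"
      using I[of p] I[of q] assms(3)[of p q] sorted_ge_nth_le[OF assms(1), of "I q" "I p"]
      by (metis lessThan_iff not_le_imp_less leD)
  qed
  with I that show ?thesis by blast
qed

lemma fits_imp_contains:
  assumes "is_partition \<alpha>" and "strict_partition (m # \<nu>)" and "x \<in> set \<alpha>"
    and "fits (set \<alpha>) \<nu> x m"
  shows "contains \<alpha> (m # \<nu>)"
proof -
  define \<mu> where "\<mu> = m # \<nu>"
  define k where "k = length \<mu>"
  from assms(4) obtain A where "A 0 = x" and "staircase (set \<alpha>) \<mu> A"
    unfolding fits_iff_staircase \<mu>_def by blast
  then have "A k = 0"
    and step: "\<And>p. p < k \<Longrightarrow> A (Suc p) + part \<mu> p \<le> A p + part \<mu> (Suc p)"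
    unfolding staircase_def k_def by auto
  have A_mem: "A p \<in> set \<alpha>" if "p < k" for p
    using \<open>staircase (set \<alpha>) \<mu> A\<close> \<open>A 0 = x\<close> assms(3) that
    unfolding staircase_def k_def by (cases p) auto
  have part_less: "part \<mu> (Suc p) < part \<mu> p" if "p < k" for p
    using assms(2) that sorted_wrt_nth_less[of "(>)" \<mu> p "Suc p"] nth_mem[of p \<mu>]
    unfolding strict_partition_def is_partition_def part_def k_def \<mu>_def by auto
  have "A (Suc p) < A p" if "p < k" for p
    using step[OF that] part_less[OF that] by linarith
  then have A_less: "A q < A p" if "p < q" "q \<le> k" for p q
    using less_of_decreasing_steps that by blast
  obtain I where I: "\<And>p. p < k \<Longrightarrow> I p < length \<alpha> \<and> \<alpha> ! I p = A p"
    and I_mono: "strict_mono_on {..<k} I"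
    using ex_rows_with_parts[of \<alpha> k A] assms(1) A_mem A_less unfolding is_partition_def by auto
  have "part \<mu> k = 0" unfolding part_def k_def by simp
  obtain C where C: "\<And>p. p \<le> k \<Longrightarrow> rank C (A p) = part \<mu> p"
    using ex_columns_with_ranks[of k A "part \<mu>", OF step less_imp_le[OF part_less]] \<open>A k = 0\<close> \<open>part \<mu> k = 0\<close>
    by blast
  have row_length: "rank C (\<alpha> ! I p) = \<mu> ! p" if "p < k" for p
    using I[OF that] C[of p] that unfolding part_def k_def by simp
  show ?thesis
    using contains_of_row_selection[where I = I and C = C] I row_length I_mono
    unfolding \<mu>_def k_def by blast
qed

lemma contains_iff_fits:
  assumes "is_partition \<alpha>" and "strict_partition (m # \<nu>)"
  shows "contains \<alpha> (m # \<nu>) \<longleftrightarrow> (\<exists>x\<in>set \<alpha>. fits (set \<alpha>) \<nu> x m)"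
  using assms contains_imp_fits fits_imp_contains strict_partition_def is_partition_def by blast

lemma fits_mono: "fits S \<nu> x q \<Longrightarrow> x \<le> x' \<Longrightarrow> fits S \<nu> x' q"
  by (induction \<nu> arbitrary: x q) force+

lemma fits_shift: "fits S \<nu> (x + d) (q + d) = fits S \<nu> x q"
  by (induction \<nu> arbitrary: x q) auto

lemma fits_cong:
  assumes "sorted_wrt (>) (q # \<nu>)" and "\<And>a. a < x \<Longrightarrow> a \<in> S \<longleftrightarrow> a \<in> S'"
  shows "fits S \<nu> x q = fits S' \<nu> x q"
  using assms
proof (induction \<nu> arbitrary: x q)
  case (Cons n \<nu>)
  have "fits S \<nu> a n = fits S' \<nu> a n" if "a < x" for a
    using Cons.IH[of n a] Cons.prems that by auto
  moreover have "a < x" if "a + q \<le> x + n" for a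
    using that Cons.prems(1) by auto
  ultimately show ?case
    using Cons.prems(2) by auto
qed simp

lemma not_fits_zero: "sorted_wrt (>) (q # \<nu>) \<Longrightarrow> 0 < q \<Longrightarrow> \<not> fits S \<nu> 0 q"
  by (cases \<nu>) auto

lemma fits_Suc_iff:
  assumes "sorted_wrt (>) (q # \<nu>)"
  shows "fits S \<nu> x (Suc q) \<longleftrightarrow> 0 < x \<and> fits S \<nu> (x - 1) q"
proof (cases x)
  case 0
  then show ?thesis using not_fits_zero[of "Suc q" \<nu> S] assms by force
next
  case (Suc y)
  then show ?thesis using fits_shift[of S \<nu> y 1 q] by simp
qed

definition min_fit :: "nat set \<Rightarrow> nat list \<Rightarrow> nat \<Rightarrow> nat" where
  "min_fit S \<nu> q = (LEAST x. fits S \<nu> x q)"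

lemma fits_iff_min_fit_le: "fits S \<nu> x' q \<Longrightarrow> fits S \<nu> x q \<longleftrightarrow> min_fit S \<nu> q \<le> x"
  unfolding min_fit_def by (metis LeastI Least_le fits_mono)

lemma min_fit_pos:
  assumes "sorted_wrt (>) (q # \<nu>)" and "0 < q" and "fits S \<nu> x q"
  shows "0 < min_fit S \<nu> q"
  using assms fits_iff_min_fit_le[OF assms(3), of 0] not_fits_zero by auto

lemma not_fits_pred_iff_eq_min_fit:
  assumes "sorted_wrt (>) (q # \<nu>)" and "0 < q" and "fits S \<nu> x q"
  shows "\<not> fits S \<nu> (x - 1) q \<longleftrightarrow> x = min_fit S \<nu> q"
  using fits_iff_min_fit_le[OF assms(3), of x] fits_iff_min_fit_le[OF assms(3), of "x - 1"]
    min_fit_pos[OF assms] assms(3)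
  by arith

section \<open>Partitions split at their largest part\<close>

lemma padd_Cons: "padd (x # xs) (y # ys) = (if 0 < x + y then [x + y] else []) @ padd xs ys"
proof -
  have "[0..<max (length (x # xs)) (length (y # ys))] = 0 # map Suc [0..<max (length xs) (length ys)]"
    by (simp add: upt_conv_Cons map_Suc_upt del: upt_Suc)
  then show ?thesis unfolding padd_def by (simp add: comp_def)
qed

lemma padd_Nil_right: "padd xs [] = filter (\<lambda>x. 0 < x) xs"
proof -
  have "map (\<lambda>i. part xs i + part [] i) [0..<length xs] = xs"
    by (rule nth_equalityI) (auto simp: part_def)
  then show ?thesis unfolding padd_def by simp
qed

lemma padd_append:
  "length zs \<le> length xs \<Longrightarrow> padd (xs @ ys) zs = padd xs zs @ filter (\<lambda>x. 0 < x) ys"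
proof (induction xs arbitrary: zs)
  case (Cons x xs)
  then show ?case by (cases zs) (auto simp: padd_Cons padd_Nil_right)
qed (simp add: padd_Nil_right)

lemma padd_replicate:
  "j \<le> k \<Longrightarrow> 0 < v \<Longrightarrow> padd (replicate k v) (replicate j w) = replicate j (v + w) @ replicate (k - j) v"
proof (induction k arbitrary: j)
  case (Suc k)
  then show ?case by (cases j) (auto simp: padd_Cons padd_Nil_right)
qed (simp add: padd_Nil_right)

lemma filter_pos_partition: "is_partition r \<Longrightarrow> filter (\<lambda>x. 0 < x) r = r"
  by (simp add: filter_id_conv is_partition_def)

text \<open>\<open>replicate k v @ r\<close> is a partition whose largest part \<open>v\<close> has multiplicity \<open>k\<close>.\<close>

definition top_block :: "nat \<Rightarrow> nat \<Rightarrow> nat list \<Rightarrow> bool" where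
  "top_block k v r \<longleftrightarrow> 0 < k \<and> 0 < v \<and> is_partition r \<and> (\<forall>y\<in>set r. y < v)"

lemma sorted_wrt_replicate: "R x x \<Longrightarrow> sorted_wrt R (replicate n x)"
  by (induction n) auto

lemma top_block_partition: "top_block k v r \<Longrightarrow> is_partition (replicate k v @ r)"
  unfolding top_block_def is_partition_def by (auto simp: sorted_wrt_append sorted_wrt_replicate)

lemma set_top_block: "top_block k v r \<Longrightarrow> set (replicate k v @ r) = insert v (set r)"
  unfolding top_block_def by (cases k) auto

lemma sorted_split_top_block:
  "sorted_wrt (\<ge>) (v # xs) \<Longrightarrow> \<exists>k r. v # xs = replicate (Suc k) v @ r \<and> (\<forall>y\<in>set r. y < v)"
  for v :: "'a :: order"
proof (induction xs)
  case (Cons w xs)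
  show ?case
  proof (cases "w = v")
    case True
    with Cons obtain k r where "v # xs = replicate (Suc k) v @ r" "\<forall>y\<in>set r. y < v" by auto
    with True show ?thesis by (intro exI[of _ "Suc k"] exI[of _ r]) simp
  next
    case False
    with Cons.prems show ?thesis by (intro exI[of _ 0] exI[of _ "w # xs"]) auto
  qed
qed simp

lemma top_block_exists:
  assumes "is_partition \<beta>" and "\<beta> \<noteq> []"
  obtains k v r where "top_block k v r" and "\<beta> = replicate k v @ r"
proof -
  obtain v xs where "\<beta> = v # xs" using assms(2) by (cases \<beta>) auto
  then have "sorted_wrt (\<ge>) (v # xs)" using assms(1) unfolding is_partition_def by simp
  then obtain k r where "v # xs = replicate (Suc k) v @ r" and r_less: "\<forall>y\<in>set r. y < v"
    using sorted_split_top_block by blast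
  with \<open>\<beta> = v # xs\<close> have \<beta>: "\<beta> = replicate (Suc k) v @ r" by simp
  have "is_partition r"
    using assms(1) unfolding \<beta> is_partition_def sorted_wrt_append set_append by blast
  have "0 < v"
    using assms(1) unfolding \<open>\<beta> = v # xs\<close> is_partition_def by simp
  with r_less \<open>is_partition r\<close> have "top_block (Suc k) v r" unfolding top_block_def by simp
  with \<beta> that show ?thesis by blast
qed

lemma top_block_unique:
  fixes v v' :: "'a :: order"
  assumes "replicate k v @ r = replicate k' v' @ r'" and "0 < k" and "0 < k'"
    and "\<forall>y\<in>set r. y < v" and "\<forall>y\<in>set r'. y < v'"
  shows "k = k' \<and> v = v' \<and> r = r'"
proof -
  have "v = v'" using assms(1-3) by (cases k; cases k') auto
  have take: "takeWhile (\<lambda>x. x = v) (replicate k v @ r) = replicate k v"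
    and drop: "dropWhile (\<lambda>x. x = v) (replicate k v @ r) = r"
    if "\<forall>y\<in>set r. y < v" for k and v :: 'a and r
  proof -
    have "r = [] \<or> hd r \<noteq> v" using that by (cases r) auto
    then show "takeWhile (\<lambda>x. x = v) (replicate k v @ r) = replicate k v"
      "dropWhile (\<lambda>x. x = v) (replicate k v @ r) = r"
      by (auto simp: takeWhile_append dropWhile_append takeWhile_eq_Nil_iff dropWhile_eq_self_iff)
  qed
  show ?thesis
    using take[OF assms(4)] take[OF assms(5)] drop[OF assms(4)] drop[OF assms(5)] assms(1) \<open>v = v'\<close>
    by (metis length_replicate)
qed

lemma mlp_top_block: "top_block k v r \<Longrightarrow> mlp (replicate k v @ r) = k"
  unfolding mlp_def top_block_def by (cases k) (auto simp: filter_empty_conv)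

lemma padd_top_block:
  "top_block k v r \<Longrightarrow> j \<le> k \<Longrightarrow>
     padd (replicate k v @ r) (replicate j w) = replicate j (v + w) @ replicate (k - j) v @ r"
  unfolding top_block_def
  using padd_append[of "replicate j w" "replicate k v" r] padd_replicate[of j k v w]
    filter_pos_partition[of r]
  by simp

lemma top_block_raise: "top_block k v r \<Longrightarrow> top_block k (v + w) r"
  unfolding top_block_def by auto

lemma top_block_append_block:
  "top_block k2 v2 r \<Longrightarrow> 0 < k1 \<Longrightarrow> v2 < v1 \<Longrightarrow> top_block k1 v1 (replicate k2 v2 @ r)"
  using top_block_partition[of k2 v2 r] set_top_block[of k2 v2 r] unfolding top_block_def by auto

lemma Mset_top_block:
  "top_block k v r \<Longrightarrow> Mset (replicate k v @ r) = {replicate k (v + w) @ r | w. True}"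
  unfolding Mset_def by (simp add: mlp_top_block padd_top_block)

lemma Nset_top_block:
  assumes "top_block k v r"
  shows "Nset (replicate k v @ r) =
    {replicate c (v + w + 1) @ replicate (k - c) (v + w) @ r | w c. 0 < c \<and> c < k}"
proof -
  have "padd (padd (replicate k v @ r) (replicate k w)) (replicate c 1) =
      replicate c (v + w + 1) @ replicate (k - c) (v + w) @ r" if "c < k" for w c
    using padd_top_block[OF assms, of k w] padd_top_block[OF top_block_raise[OF assms, of w], of c 1] that
    by simp
  then show ?thesis
    unfolding Nset_def mlp_top_block[OF assms] by (metis (opaque_lifting) less_imp_le)
qed

lemma strict_partition_sorted: "strict_partition (m # \<nu>) \<Longrightarrow> sorted_wrt (>) (m # \<nu>)"
  unfolding strict_partition_def by simp

lemma strict_partition_raise_head: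
  "strict_partition (m # \<nu>) \<Longrightarrow> strict_partition ((m + d) # \<nu>)"
  "strict_partition (m # \<nu>) \<Longrightarrow> strict_partition ((m + Suc d) # m # \<nu>)"
  unfolding strict_partition_def is_partition_def by auto

lemma fits_top_block_cong:
  assumes "top_block k v r" and "sorted_wrt (>) (m # \<nu>)" and "x \<le> v"
  shows "fits (set (replicate k v @ r)) \<nu> x m = fits (set r) \<nu> x m"
  using assms by (intro fits_cong) (auto simp: set_top_block)

lemma contains_top_block:
  assumes "top_block k v r" and "strict_partition (m # \<nu>)"
  shows "contains (replicate k v @ r) (m # \<nu>) \<longleftrightarrow> fits (set r) \<nu> v m"
proof -
  let ?\<beta> = "replicate k v @ r"
  have "contains ?\<beta> (m # \<nu>) \<longleftrightarrow> (\<exists>x\<in>set ?\<beta>. fits (set ?\<beta>) \<nu> x m)"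
    using contains_iff_fits[OF top_block_partition[OF assms(1)] assms(2)] .
  also have "\<dots> \<longleftrightarrow> fits (set ?\<beta>) \<nu> v m"
    using assms(1) fits_mono unfolding top_block_def by (auto simp: set_top_block[OF assms(1)])
  finally show ?thesis
    using fits_top_block_cong[OF assms(1) strict_partition_sorted[OF assms(2)]] by simp
qed

lemma contains_top_block_Suc:
  assumes "top_block k v r" and "strict_partition (m # \<nu>)"
  shows "contains (replicate k v @ r) (Suc m # \<nu>) \<longleftrightarrow> fits (set r) \<nu> (v - 1) m"
proof -
  let ?\<beta> = "replicate k v @ r"
  have "contains ?\<beta> (Suc m # \<nu>) \<longleftrightarrow> (\<exists>x\<in>set ?\<beta>. fits (set ?\<beta>) \<nu> x (Suc m))"
    using contains_iff_fits[OF top_block_partition[OF assms(1)]]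
      strict_partition_raise_head(1)[OF assms(2), of 1] by simp
  also have "\<dots> \<longleftrightarrow> (\<exists>x\<in>set ?\<beta>. 0 < x \<and> fits (set ?\<beta>) \<nu> (x - 1) m)"
    using fits_Suc_iff[OF strict_partition_sorted[OF assms(2)]] by simp
  also have "\<dots> \<longleftrightarrow> fits (set ?\<beta>) \<nu> (v - 1) m"
    using assms(1) fits_mono[of "set ?\<beta>" \<nu> _ m "v - 1"] unfolding top_block_def
    by (auto simp: set_top_block[OF assms(1)] diff_le_mono)
  finally show ?thesis
    using fits_top_block_cong[OF assms(1) strict_partition_sorted[OF assms(2)]] by simp
qed

lemma contains_gap_top_block:
  assumes "top_block k v r" and "strict_partition (m # \<nu>)" and "0 < d"
  shows "contains (replicate k v @ r) ((m + d) # m # \<nu>) \<longleftrightarrow> (\<exists>a\<in>set r. a + d \<le> v \<and> fits (set r) \<nu> a m)"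
proof -
  let ?\<beta> = "replicate k v @ r"
  have "contains ?\<beta> ((m + d) # m # \<nu>) \<longleftrightarrow> (\<exists>b\<in>set ?\<beta>. \<exists>a\<in>set ?\<beta>. a + d \<le> b \<and> fits (set ?\<beta>) \<nu> a m)"
    using contains_iff_fits[OF top_block_partition[OF assms(1)]]
      strict_partition_raise_head(2)[OF assms(2), of "d - 1"] assms(3) by simp
  also have "\<dots> \<longleftrightarrow> (\<exists>a\<in>set ?\<beta>. a + d \<le> v \<and> fits (set ?\<beta>) \<nu> a m)"
    using assms(1) unfolding top_block_def by (force simp: set_top_block[OF assms(1)])
  also have "\<dots> \<longleftrightarrow> (\<exists>a\<in>set r. a + d \<le> v \<and> fits (set r) \<nu> a m)"
    using fits_top_block_cong[OF assms(1) strict_partition_sorted[OF assms(2)]] assms(3)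
    by (auto simp: set_top_block[OF assms(1)])
  finally show ?thesis .
qed

lemma contains_bar_top_block:
  assumes "top_block k v r" and "strict_partition (m # \<nu>)"
  shows "contains (replicate k v @ r) (Suc m # m # \<nu>) \<longleftrightarrow> contains r (m # \<nu>)"
  using contains_gap_top_block[OF assms, of 1] contains_iff_fits[of r, OF _ assms(2)] assms(1)
  unfolding top_block_def by (auto simp: Suc_le_eq)

lemma not_contains_Nil: "strict_partition (m # \<nu>) \<Longrightarrow> \<not> contains [] (m # \<nu>)"
  using contains_iff_fits[of "[]"] by (simp add: is_partition_def)

section \<open>Membership in \<open>Q\<close> in terms of the largest part\<close>

lemma weight_top_block: "top_block k v r \<Longrightarrow> 0 < weight (replicate k v @ r)"
  unfolding weight_def top_block_def by (cases k) auto

lemma Q_succ_top_block_iff: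
  assumes "top_block k v r" and "strict_partition (m # \<nu>)"
  shows "replicate k v @ r \<in> Q (m # \<nu>) (Suc m # \<nu>) \<longleftrightarrow>
    fits (set r) \<nu> v m \<and> v = min_fit (set r) \<nu> m"
proof -
  have "0 < m" using assms(2) by (simp add: strict_partition_def is_partition_def)
  have "replicate k v @ r \<in> Q (m # \<nu>) (Suc m # \<nu>) \<longleftrightarrow>
      fits (set r) \<nu> v m \<and> \<not> fits (set r) \<nu> (v - 1) m"
    using contains_top_block[OF assms] contains_top_block_Suc[OF assms]
      top_block_partition[OF assms(1)] weight_top_block[OF assms(1)]
    unfolding Q_def by simp
  also have "\<dots> \<longleftrightarrow> fits (set r) \<nu> v m \<and> v = min_fit (set r) \<nu> m"
    using not_fits_pred_iff_eq_min_fit[OF strict_partition_sorted[OF assms(2)] \<open>0 < m\<close>] by blast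
  finally show ?thesis .
qed

lemma Q_bar_top_block_iff:
  assumes "top_block k v r" and "strict_partition (m # \<nu>)"
  shows "replicate k v @ r \<in> Q (m # \<nu>) (Suc m # m # \<nu>) \<longleftrightarrow>
    fits (set r) \<nu> v m \<and> \<not> contains r (m # \<nu>)"
  using contains_top_block[OF assms] contains_bar_top_block[OF assms]
    top_block_partition[OF assms(1)] weight_top_block[OF assms(1)]
  unfolding Q_def by simp

lemma Q_bar_succ_two_blocks_iff:
  assumes top1: "top_block k1 v1 (replicate k2 v2 @ r)" and top2: "top_block k2 v2 r"
    and \<mu>: "strict_partition (m # \<nu>)"
  shows "replicate k1 v1 @ replicate k2 v2 @ r \<in> Q (Suc m # m # \<nu>) (Suc (Suc m) # m # \<nu>) \<longleftrightarrow>
    v1 = Suc v2 \<and> fits (set r) \<nu> v2 m \<and> \<not> contains r (m # \<nu>)"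
proof -
  let ?\<rho> = "replicate k2 v2 @ r"
  have "v2 < v1" using top1 top2 unfolding top_block_def by (cases k2) auto
  have cong: "fits (set ?\<rho>) \<nu> a m = fits (set r) \<nu> a m" if "a \<le> v2" for a
    using fits_top_block_cong[OF top2 strict_partition_sorted[OF \<mu>] that] .
  have "contains (replicate k1 v1 @ ?\<rho>) (Suc m # m # \<nu>) \<longleftrightarrow> fits (set r) \<nu> v2 m"
    using contains_bar_top_block[OF top1 \<mu>] contains_top_block[OF top2 \<mu>] by simp
  moreover have "contains (replicate k1 v1 @ ?\<rho>) ((m + 2) # m # \<nu>) \<longleftrightarrow>
      (\<exists>a\<in>set ?\<rho>. a + 2 \<le> v1 \<and> fits (set ?\<rho>) \<nu> a m)"
    using contains_gap_top_block[OF top1 \<mu>, of 2] by simp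
  moreover have "(\<exists>a\<in>set ?\<rho>. a + 2 \<le> v1 \<and> fits (set ?\<rho>) \<nu> a m) \<longleftrightarrow>
      (v2 + 2 \<le> v1 \<and> fits (set r) \<nu> v2 m) \<or> contains r (m # \<nu>)"
  proof
    assume "\<exists>a\<in>set ?\<rho>. a + 2 \<le> v1 \<and> fits (set ?\<rho>) \<nu> a m"
    then obtain a where a: "a \<in> insert v2 (set r)" "a + 2 \<le> v1" "fits (set ?\<rho>) \<nu> a m"
      using set_top_block[OF top2] by auto
    then have "a \<le> v2" using top2 unfolding top_block_def by auto
    with a cong[of a] show "(v2 + 2 \<le> v1 \<and> fits (set r) \<nu> v2 m) \<or> contains r (m # \<nu>)"
      using contains_iff_fits[of r, OF _ \<mu>] top2 unfolding top_block_def by auto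
  next
    assume "(v2 + 2 \<le> v1 \<and> fits (set r) \<nu> v2 m) \<or> contains r (m # \<nu>)"
    then show "\<exists>a\<in>set ?\<rho>. a + 2 \<le> v1 \<and> fits (set ?\<rho>) \<nu> a m"
    proof
      assume "v2 + 2 \<le> v1 \<and> fits (set r) \<nu> v2 m"
      then show ?thesis using cong[of v2] set_top_block[OF top2] by auto
    next
      assume "contains r (m # \<nu>)"
      then obtain a where "a \<in> set r" "fits (set r) \<nu> a m"
        using contains_iff_fits[of r, OF _ \<mu>] top2 unfolding top_block_def by auto
      moreover have "a < v2" using \<open>a \<in> set r\<close> top2 unfolding top_block_def by auto
      ultimately show ?thesis
        using cong[of a] set_top_block[OF top2] \<open>v2 < v1\<close> by (intro bexI[of _ a]) auto
    qed
  qed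
  ultimately have "replicate k1 v1 @ ?\<rho> \<in> Q (Suc m # m # \<nu>) (Suc (Suc m) # m # \<nu>) \<longleftrightarrow>
      fits (set r) \<nu> v2 m \<and> \<not> (v2 + 2 \<le> v1) \<and> \<not> contains r (m # \<nu>)"
    using top_block_partition[OF top1] weight_top_block[OF top1]
    unfolding Q_def by (auto simp: numeral_2_eq_2)
  then show ?thesis using \<open>v2 < v1\<close> by auto
qed

lemma Q_partition: "\<beta> \<in> Q \<tau> \<mu> \<Longrightarrow> is_partition \<beta> \<and> \<beta> \<noteq> []"
  unfolding Q_def weight_def by auto

lemma contains_iff_min_fit_le:
  assumes "is_partition r" and "strict_partition (m # \<nu>)" and "fits (set r) \<nu> x m"
  shows "contains r (m # \<nu>) \<longleftrightarrow> (\<exists>y\<in>set r. min_fit (set r) \<nu> m \<le> y)"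
  using contains_iff_fits[OF assms(1,2)] fits_iff_min_fit_le[OF assms(3)] by simp

lemma Q_succ_min_fit:
  assumes "strict_partition (m # \<nu>)" and "is_partition r" and "0 < k"
    and "fits (set r) \<nu> v m" and "\<not> contains r (m # \<nu>)"
  shows "top_block k (min_fit (set r) \<nu> m) r"
    and "replicate k (min_fit (set r) \<nu> m) @ r \<in> Q (m # \<nu>) (Suc m # \<nu>)"
    and "min_fit (set r) \<nu> m \<le> v"
proof -
  let ?u = "min_fit (set r) \<nu> m"
  have "fits (set r) \<nu> ?u m" using fits_iff_min_fit_le[OF assms(4)] by simp
  moreover have "0 < ?u"
    using min_fit_pos[OF strict_partition_sorted[OF assms(1)] _ assms(4)] assms(1)
    unfolding strict_partition_def is_partition_def by simp
  moreover have "\<forall>y\<in>set r. y < ?u"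
    using contains_iff_min_fit_le[OF assms(2,1,4)] assms(5) by auto
  ultimately show top: "top_block k ?u r"
    using assms(2,3) unfolding top_block_def by simp
  show "replicate k ?u @ r \<in> Q (m # \<nu>) (Suc m # \<nu>)"
    using Q_succ_top_block_iff[OF top assms(1)] \<open>fits (set r) \<nu> ?u m\<close> by simp
  show "?u \<le> v" using fits_iff_min_fit_le[OF assms(4)] assms(4) by simp
qed

lemma Q_succ_elim:
  assumes "\<alpha> \<in> Q (m # \<nu>) (Suc m # \<nu>)" and "strict_partition (m # \<nu>)"
  obtains k r where "top_block k (min_fit (set r) \<nu> m) r"
    and "\<alpha> = replicate k (min_fit (set r) \<nu> m) @ r"
    and "fits (set r) \<nu> (min_fit (set r) \<nu> m) m" and "\<not> contains r (m # \<nu>)"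
proof -
  obtain k v r where top: "top_block k v r" and \<alpha>: "\<alpha> = replicate k v @ r"
    using top_block_exists Q_partition[OF assms(1)] by metis
  have v: "fits (set r) \<nu> v m" "v = min_fit (set r) \<nu> m"
    using Q_succ_top_block_iff[OF top assms(2)] assms(1) unfolding \<alpha> by blast+
  moreover have "\<not> contains r (m # \<nu>)"
    using contains_iff_min_fit_le[OF _ assms(2) v(1)] top v(2) unfolding top_block_def by auto
  ultimately show ?thesis using that top \<alpha> v(2) by blast
qed

section \<open>The maps \<open>M\<close> and \<open>N\<close>\<close>

lemma MS_Q_succ_subset:
  assumes "strict_partition (m # \<nu>)"
  shows "MS (Q (m # \<nu>) (Suc m # \<nu>)) \<subseteq> Q (m # \<nu>) (Suc m # m # \<nu>)"
proof
  fix \<beta> assume "\<beta> \<in> MS (Q (m # \<nu>) (Suc m # \<nu>))"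
  then obtain \<alpha> where \<alpha>: "\<alpha> \<in> Q (m # \<nu>) (Suc m # \<nu>)" and "\<beta> \<in> Mset \<alpha>"
    unfolding MS_def by blast
  then obtain k r where top: "top_block k (min_fit (set r) \<nu> m) r"
    and "\<alpha> = replicate k (min_fit (set r) \<nu> m) @ r"
    and fits: "fits (set r) \<nu> (min_fit (set r) \<nu> m) m" and "\<not> contains r (m # \<nu>)"
    using Q_succ_elim[OF _ assms] by metis
  with \<open>\<beta> \<in> Mset \<alpha>\<close> obtain w where "\<beta> = replicate k (min_fit (set r) \<nu> m + w) @ r"
    using Mset_top_block by auto
  then show "\<beta> \<in> Q (m # \<nu>) (Suc m # m # \<nu>)"
    using Q_bar_top_block_iff[OF top_block_raise[OF top] assms] fits_mono[OF fits]
      \<open>\<not> contains r (m # \<nu>)\<close> by simp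
qed

lemma Q_bar_unique_M_preimage:
  assumes "strict_partition (m # \<nu>)" and "\<beta> \<in> Q (m # \<nu>) (Suc m # m # \<nu>)"
  shows "\<exists>!\<alpha>. \<alpha> \<in> Q (m # \<nu>) (Suc m # \<nu>) \<and> \<beta> \<in> Mset \<alpha>"
proof -
  obtain k v r where top: "top_block k v r" and \<beta>: "\<beta> = replicate k v @ r"
    using top_block_exists Q_partition[OF assms(2)] by metis
  then have fits: "fits (set r) \<nu> v m" and "\<not> contains r (m # \<nu>)"
    using Q_bar_top_block_iff[OF top assms(1)] assms(2) by simp_all
  let ?u = "min_fit (set r) \<nu> m"
  have "is_partition r" "0 < k" using top unfolding top_block_def by simp_all
  note min = Q_succ_min_fit[OF assms(1) this fits \<open>\<not> contains r (m # \<nu>)\<close>]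
  show ?thesis
  proof (rule ex1I[of _ "replicate k ?u @ r"])
    have "\<beta> = replicate k (?u + (v - ?u)) @ r" using \<beta> min(3) by simp
    then have "\<beta> \<in> Mset (replicate k ?u @ r)"
      unfolding Mset_top_block[OF min(1)] by blast
    with min(2) show "replicate k ?u @ r \<in> Q (m # \<nu>) (Suc m # \<nu>) \<and> \<beta> \<in> Mset (replicate k ?u @ r)"
      by blast
  next
    fix \<alpha> assume "\<alpha> \<in> Q (m # \<nu>) (Suc m # \<nu>) \<and> \<beta> \<in> Mset \<alpha>"
    then obtain k' r' where top': "top_block k' (min_fit (set r') \<nu> m) r'"
      and \<alpha>: "\<alpha> = replicate k' (min_fit (set r') \<nu> m) @ r'" and "\<beta> \<in> Mset \<alpha>"
      using Q_succ_elim[OF _ assms(1)] by metis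
    then obtain w where "\<beta> = replicate k' (min_fit (set r') \<nu> m + w) @ r'"
      using Mset_top_block by auto
    with \<beta> top top_block_raise[OF top', of w] have "k' = k" "r' = r"
      using top_block_unique unfolding top_block_def by metis+
    then show "\<alpha> = replicate k ?u @ r" using \<alpha> by simp
  qed
qed

lemma NS_Q_succ_subset:
  assumes "strict_partition (m # \<nu>)"
  shows "NS (Q (m # \<nu>) (Suc m # \<nu>)) \<subseteq> Q (Suc m # m # \<nu>) (Suc (Suc m) # m # \<nu>)"
proof
  fix \<beta> assume "\<beta> \<in> NS (Q (m # \<nu>) (Suc m # \<nu>))"
  then obtain \<alpha> where \<alpha>: "\<alpha> \<in> Q (m # \<nu>) (Suc m # \<nu>)" and "\<beta> \<in> Nset \<alpha>"
    unfolding NS_def by blast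
  then obtain k r where top: "top_block k (min_fit (set r) \<nu> m) r"
    and "\<alpha> = replicate k (min_fit (set r) \<nu> m) @ r"
    and fits: "fits (set r) \<nu> (min_fit (set r) \<nu> m) m" and "\<not> contains r (m # \<nu>)"
    using Q_succ_elim[OF _ assms] by metis
  with \<open>\<beta> \<in> Nset \<alpha>\<close> obtain w c where "0 < c" "c < k"
    and \<beta>: "\<beta> = replicate c (min_fit (set r) \<nu> m + w + 1) @
      replicate (k - c) (min_fit (set r) \<nu> m + w) @ r"
    using Nset_top_block by auto
  have top2: "top_block (k - c) (min_fit (set r) \<nu> m + w) r"
    using top_block_raise[OF top, of w] \<open>c < k\<close> unfolding top_block_def by simp
  note top1 = top_block_append_block[OF top2 \<open>0 < c\<close>, of "min_fit (set r) \<nu> m + w + 1"]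
  show "\<beta> \<in> Q (Suc m # m # \<nu>) (Suc (Suc m) # m # \<nu>)"
    using Q_bar_succ_two_blocks_iff[OF top1 top2 assms] fits_mono[OF fits]
      \<open>\<not> contains r (m # \<nu>)\<close> \<beta> by simp
qed

lemma Q_bar_succ_elim:
  assumes "strict_partition (m # \<nu>)" and "\<beta> \<in> Q (Suc m # m # \<nu>) (Suc (Suc m) # m # \<nu>)"
  obtains k1 k2 v r where "\<beta> = replicate k1 (Suc v) @ replicate k2 v @ r" and "0 < k1"
    and "top_block k2 v r" and "fits (set r) \<nu> v m" and "\<not> contains r (m # \<nu>)"
proof -
  obtain k1 v1 \<rho> where top1: "top_block k1 v1 \<rho>" and \<beta>: "\<beta> = replicate k1 v1 @ \<rho>"
    using top_block_exists Q_partition[OF assms(2)] by metis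
  have "contains \<rho> (m # \<nu>)"
    using contains_bar_top_block[OF top1 assms(1)] assms(2) unfolding Q_def \<beta> by simp
  then have "\<rho> \<noteq> []" using not_contains_Nil[OF assms(1)] by auto
  then obtain k2 v2 r where top2: "top_block k2 v2 r" and \<rho>: "\<rho> = replicate k2 v2 @ r"
    using top_block_exists top1 unfolding top_block_def by metis
  have "v2 < v1" using top1 top2 unfolding \<rho> top_block_def by (cases k2) auto
  with top1 top2 \<rho> assms \<beta> have "v1 = Suc v2" "fits (set r) \<nu> v2 m" "\<not> contains r (m # \<nu>)"
    using Q_bar_succ_two_blocks_iff by simp_all
  with that \<beta> \<rho> top1 top2 show ?thesis unfolding top_block_def by blast
qed

lemma Q_bar_succ_unique_N_preimage:
  assumes "strict_partition (m # \<nu>)" and "\<beta> \<in> Q (Suc m # m # \<nu>) (Suc (Suc m) # m # \<nu>)"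
  shows "\<exists>!\<alpha>. \<alpha> \<in> Q (m # \<nu>) (Suc m # \<nu>) \<and> \<beta> \<in> Nset \<alpha>"
proof -
  obtain k1 k2 v r where \<beta>: "\<beta> = replicate k1 (Suc v) @ replicate k2 v @ r" and "0 < k1"
    and top2: "top_block k2 v r" and fits: "fits (set r) \<nu> v m" and "\<not> contains r (m # \<nu>)"
    using Q_bar_succ_elim[OF assms] by metis
  let ?u = "min_fit (set r) \<nu> m"
  have "is_partition r" "0 < k1 + k2" using top2 \<open>0 < k1\<close> unfolding top_block_def by simp_all
  note min = Q_succ_min_fit[OF assms(1) this fits \<open>\<not> contains r (m # \<nu>)\<close>]
  show ?thesis
  proof (rule ex1I[of _ "replicate (k1 + k2) ?u @ r"])
    have "\<beta> = replicate k1 (?u + (v - ?u) + 1) @ replicate (k1 + k2 - k1) (?u + (v - ?u)) @ r"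
      using \<beta> min(3) by simp
    then have "\<beta> \<in> Nset (replicate (k1 + k2) ?u @ r)"
      unfolding Nset_top_block[OF min(1)] using \<open>0 < k1\<close> top2 unfolding top_block_def by force
    with min(2) show "replicate (k1 + k2) ?u @ r \<in> Q (m # \<nu>) (Suc m # \<nu>) \<and>
        \<beta> \<in> Nset (replicate (k1 + k2) ?u @ r)"
      by blast
  next
    fix \<alpha> assume "\<alpha> \<in> Q (m # \<nu>) (Suc m # \<nu>) \<and> \<beta> \<in> Nset \<alpha>"
    then obtain k r' where top: "top_block k (min_fit (set r') \<nu> m) r'"
      and \<alpha>: "\<alpha> = replicate k (min_fit (set r') \<nu> m) @ r'" and "\<beta> \<in> Nset \<alpha>"
      using Q_succ_elim[OF _ assms(1)] by metis
    then obtain w c where "0 < c" "c < k"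
      and \<beta>': "\<beta> = replicate c (min_fit (set r') \<nu> m + w + 1) @
        replicate (k - c) (min_fit (set r') \<nu> m + w) @ r'"
      using Nset_top_block by auto
    have top2': "top_block (k - c) (min_fit (set r') \<nu> m + w) r'"
      using top_block_raise[OF top, of w] \<open>c < k\<close> unfolding top_block_def by simp
    have "c = k1" and tails: "replicate (k - c) (min_fit (set r') \<nu> m + w) @ r' = replicate k2 v @ r"
      using top_block_unique[OF \<beta>'[symmetric, unfolded \<beta>] \<open>0 < c\<close> \<open>0 < k1\<close>]
        top_block_append_block[OF top2' \<open>0 < c\<close>, of "min_fit (set r') \<nu> m + w + 1"]
        top_block_append_block[OF top2 \<open>0 < k1\<close>, of "Suc v"]
      unfolding top_block_def by auto
    have "k - c = k2 \<and> min_fit (set r') \<nu> m + w = v \<and> r' = r"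
      by (rule top_block_unique[OF tails]) (use top2 top2' in \<open>simp_all add: top_block_def\<close>)
    then have "k - c = k2" "r' = r" by simp_all
    then show "\<alpha> = replicate (k1 + k2) ?u @ r"
      using \<alpha> \<open>c = k1\<close> \<open>c < k\<close> by simp
  qed
qed

lemma MS_Q_succ_eq:
  assumes "strict_partition (m # \<nu>)"
  shows "MS (Q (m # \<nu>) (Suc m # \<nu>)) = Q (m # \<nu>) (Suc m # m # \<nu>)"
proof
  show "Q (m # \<nu>) (Suc m # m # \<nu>) \<subseteq> MS (Q (m # \<nu>) (Suc m # \<nu>))"
    unfolding MS_def using Q_bar_unique_M_preimage[OF assms] by (meson UN_iff subsetI ex1_implies_ex)
qed (rule MS_Q_succ_subset[OF assms])

lemma NS_Q_succ_eq:
  assumes "strict_partition (m # \<nu>)"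
  shows "NS (Q (m # \<nu>) (Suc m # \<nu>)) = Q (Suc m # m # \<nu>) (Suc (Suc m) # m # \<nu>)"
proof
  show "Q (Suc m # m # \<nu>) (Suc (Suc m) # m # \<nu>) \<subseteq> NS (Q (m # \<nu>) (Suc m # \<nu>))"
    unfolding NS_def using Q_bar_succ_unique_N_preimage[OF assms] by (meson UN_iff subsetI ex1_implies_ex)
qed (rule NS_Q_succ_subset[OF assms])

lemma padd_Cons_one: "is_partition xs \<Longrightarrow> padd (x # xs) [1] = Suc x # xs"
  by (simp add: padd_Cons padd_Nil_right filter_pos_partition)

lemma pbar_Cons: "is_partition (m # \<nu>) \<Longrightarrow> pbar (m # \<nu>) = Suc m # m # \<nu>"
  unfolding pbar_def is_partition_def by (simp add: filter_id_conv)

theorem mainTheorem3: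
  fixes \<mu> :: "nat list"
  assumes "strict_partition \<mu>" and "\<mu> \<noteq> []"
  shows "MS (Q \<mu> (padd \<mu> [1])) = Q \<mu> (pbar \<mu>)
       \<and> NS (Q \<mu> (padd \<mu> [1])) = Q (pbar \<mu>) (padd (pbar \<mu>) [1])
       \<and> (\<forall>\<beta>\<in>Q \<mu> (pbar \<mu>). \<exists>!\<alpha>. \<alpha> \<in> Q \<mu> (padd \<mu> [1]) \<and> \<beta> \<in> Mset \<alpha>)
       \<and> (\<forall>\<beta>\<in>Q (pbar \<mu>) (padd (pbar \<mu>) [1]). \<exists>!\<alpha>. \<alpha> \<in> Q \<mu> (padd \<mu> [1]) \<and> \<beta> \<in> Nset \<alpha>)"
proof -
  obtain m \<nu> where \<mu>: "\<mu> = m # \<nu>" using assms(2) by (cases \<mu>) auto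
  have "is_partition (m # \<nu>)" "is_partition \<nu>"
    using assms(1) unfolding \<mu> strict_partition_def is_partition_def by auto
  note eqs = padd_Cons_one[OF \<open>is_partition \<nu>\<close>] pbar_Cons[OF \<open>is_partition (m # \<nu>)\<close>]
    padd_Cons_one[OF \<open>is_partition (m # \<nu>)\<close>]
  show ?thesis
    using assms(1) unfolding \<mu> eqs
    by (intro conjI ballI MS_Q_succ_eq NS_Q_succ_eq Q_bar_unique_M_preimage Q_bar_succ_unique_N_preimage)
qed

end
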